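(* Let $A$ be a nonempty set of positive integers and let $n$ be a positive integer. Then (a) $\displaystyle cl_A(n)=\sum_{k=0}^{n-1}cl_A(k)\,\tau^s_A(n-k)$; (b) $\displaystyle\sum_{k=0}^{n}cl_A(k)\,q_A(n-k)-\sum_{t=0}^{n-1}cl_A(t)\,N^q_A(n-t)=q_A(n)$.
   Context: A composition of $m$ is an ordered sequence of positive integers summing to $m$; it is Carlitz if each part differs from its adjacent parts. $cl_A(m)$ is the number of Carlitz compositions of $m$ with all parts in $A$, with $cl_A(0)=1$. $q_A(m)$ is the number of partitions of $m$ into pairwise distinct parts from $A$ ($q_A(0)=1$), and $N^q_A(m)$ is the total number of parts over all such partitions. $\tau^s_A(m)=\sum_{a\in A,\,a\mid m}(-1)^{m/a-1}$. *)

theory Defs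
  imports Main
begin

definition carlitz_comps :: "nat set \<Rightarrow> nat \<Rightarrow> nat list set" where
  "carlitz_comps A m = {xs. (\<forall>x\<in>set xs. 0 < x \<and> x \<in> A) \<and> sum_list xs = m
      \<and> (\<forall>i. Suc i < length xs \<longrightarrow> xs ! i \<noteq> xs ! Suc i)}"

definition cl :: "nat set \<Rightarrow> nat \<Rightarrow> nat" where
  "cl A m = card (carlitz_comps A m)"

(* partitions of m into pairwise distinct parts from A, represented as finite sets of parts *)
definition distinct_parts :: "nat set \<Rightarrow> nat \<Rightarrow> nat set set" where
  "distinct_parts A m = {S. finite S \<and> S \<subseteq> A \<and> (\<forall>x\<in>S. 0 < x) \<and> \<Sum>S = m}"

definition q :: "nat set \<Rightarrow> nat \<Rightarrow> nat" where
  "q A m = card (distinct_parts A m)"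

definition Nq :: "nat set \<Rightarrow> nat \<Rightarrow> nat" where
  "Nq A m = (\<Sum>S\<in>distinct_parts A m. card S)"

definition tau_s :: "nat set \<Rightarrow> nat \<Rightarrow> int" where
  "tau_s A m = (\<Sum>a\<in>{a\<in>A. 0 < a \<and> a dvd m}. (-1) ^ (m div a - 1))"

end

theory Submission
  imports Defs "HOL-Computational_Algebra.Formal_Power_Series"
begin

(*
  Removing the first part a from a Carlitz composition of m that starts with a gives a Carlitz
  composition of m - a that does not start with a, and conversely. So the number h_a(m) of
  compositions starting with a satisfies h_a(m) = cl(m - a) - h_a(m - a), which unrolls to the
  alternating sum of the values cl(m - j a). Summing over a and collecting the terms with the
  same k = m - j a yields (a). Inserting or deleting the part a in a partition into distinct
  parts gives the same recurrence for the number of partitions of m containing a, with q in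
  place of cl; summing over a counts every part once, hence N^q(n) = sum_k q(k) tau(n - k).
  For the generating functions C, Q, N of cl, q, N^q and T of tau these identities read
  C = 1 + C T and N = Q T, so C Q - C N = Q (C - C T) = Q, which is (b).
*)

lemma alternating_sum_of_recurrence:
  fixes f F :: "nat \<Rightarrow> 'a::ring_1"
  assumes "0 < a" and below: "\<And>m. m < a \<Longrightarrow> f m = 0" and step: "\<And>m. f (m + a) = F m - f m"
  shows "f m = (\<Sum>j=1..m div a. (-1)^(j-1) * F (m - j*a))"
proof (induction m rule: less_induct)
  case (less m)
  show ?case
  proof (cases "m < a")
    case True
    then show ?thesis by (simp add: below)
  next
    case False
    then obtain k where m: "m = k + a" by (metis le_add_diff_inverse2 not_less)
    have IH: "f k = (\<Sum>j=1..k div a. (-1)^(j-1) * F (k - j*a))"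
      using less \<open>0 < a\<close> m by simp
    have "(\<Sum>j=1..m div a. (-1)^(j-1) * F (m - j*a))
        = F k + (\<Sum>j=Suc 1..Suc (k div a). (-1)^(j-1) * F (m - j*a))"
      using \<open>0 < a\<close> by (simp add: m sum.atLeast_Suc_atMost)
    also have "(\<Sum>j=Suc 1..Suc (k div a). (-1)^(j-1) * F (m - j*a))
        = (\<Sum>j=1..k div a. (-1)^j * F (k - j*a))"
      by (subst sum.shift_bounds_cl_Suc_ivl) (simp add: m)
    also have "\<dots> = - f k"
      unfolding IH sum_negf[symmetric]
      by (rule sum.cong) (auto simp: not_le Suc_le_eq power_eq_if)
    finally show ?thesis using step[of k] by (simp add: m)
  qed
qed

lemma sum_alternating_sums_eq_tau_convolution:
  fixes F :: "nat \<Rightarrow> int"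
  assumes "0 < m"
  shows "(\<Sum>a\<in>{a\<in>A. 0 < a \<and> a \<le> m}. \<Sum>j=1..m div a. (-1)^(j-1) * F (m - j*a))
       = (\<Sum>k=0..m-1. F k * tau_s A (m - k))"
proof -
  define B where "B = {a\<in>A. 0 < a \<and> a \<le> m}"
  have "finite B" unfolding B_def by (rule finite_subset[of _ "{..m}"]) auto
  have reindex: "(\<Sum>j=1..m div a. (-1)^(j-1) * F (m - j*a))
      = (\<Sum>k\<in>{k\<in>{0..m-1}. a dvd (m - k)}. (-1)^((m - k) div a - 1) * F k)" if "0 < a" for a
  proof (rule sum.reindex_bij_witness[where i="\<lambda>k. (m - k) div a" and j="\<lambda>j. m - j*a"])
    fix j assume j: "j \<in> {1..m div a}"
    then have "j * a \<le> m"
      by (meson atLeastAtMost_iff div_times_less_eq_dividend le_trans mult_le_mono1)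
    moreover have "0 < j * a" using j \<open>0 < a\<close> by auto
    ultimately have "m - j*a \<le> m - 1" by linarith
    with \<open>j * a \<le> m\<close> show "(m - (m - j*a)) div a = j" "m - j*a \<in> {k\<in>{0..m-1}. a dvd (m - k)}"
      "(-1)^((m - (m - j*a)) div a - 1) * F (m - j*a) = (-1)^(j-1) * F (m - j*a)"
      using \<open>0 < a\<close> by auto
  next
    fix k assume k: "k \<in> {k\<in>{0..m-1}. a dvd (m - k)}"
    then obtain c where c: "m - k = a * c" by auto
    with k \<open>0 < m\<close> have "0 < c" by (cases c) auto
    moreover have "c \<le> m div a" using c \<open>0 < a\<close>
      by (metis div_le_mono nonzero_mult_div_cancel_left diff_le_self not_gr_zero)
    ultimately show "m - (m - k) div a * a = k" "(m - k) div a \<in> {1..m div a}"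
      using c \<open>0 < a\<close> k by (auto simp: mult.commute)
  qed
  have "(\<Sum>a\<in>B. \<Sum>j=1..m div a. (-1)^(j-1) * F (m - j*a))
      = (\<Sum>a\<in>B. \<Sum>k\<in>{k\<in>{0..m-1}. a dvd (m - k)}. (-1)^((m - k) div a - 1) * F k)"
    using reindex by (simp add: B_def)
  also have "\<dots> = (\<Sum>k\<in>{0..m-1}. \<Sum>a\<in>{a\<in>B. a dvd (m - k)}. (-1)^((m - k) div a - 1) * F k)"
    by (rule sum.swap_restrict) (use \<open>finite B\<close> in auto)
  also have "\<dots> = (\<Sum>k=0..m-1. F k * tau_s A (m - k))"
  proof (rule sum.cong)
    fix k assume "k \<in> {0..m-1}"
    then have "{a\<in>B. a dvd (m - k)} = {a\<in>A. 0 < a \<and> a dvd (m - k)}"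
      using \<open>0 < m\<close> by (auto simp: B_def dest: dvd_imp_le)
    then show "(\<Sum>a\<in>{a\<in>B. a dvd (m - k)}. (-1)^((m - k) div a - 1) * F k) = F k * tau_s A (m - k)"
      by (simp add: tau_s_def sum_distrib_left mult.commute)
  qed simp
  finally show ?thesis by (simp add: B_def)
qed

lemma sum_head_recurrences_eq_tau_convolution:
  fixes F :: "nat \<Rightarrow> int" and f :: "nat \<Rightarrow> nat \<Rightarrow> int"
  assumes "0 < n"
    and below: "\<And>a m. a \<in> A \<Longrightarrow> 0 < a \<Longrightarrow> m < a \<Longrightarrow> f a m = 0"
    and step: "\<And>a m. a \<in> A \<Longrightarrow> 0 < a \<Longrightarrow> f a (m + a) = F m - f a m"
  shows "(\<Sum>a\<in>{a\<in>A. 0 < a \<and> a \<le> n}. f a n) = (\<Sum>k=0..n-1. F k * tau_s A (n - k))"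
proof -
  have "(\<Sum>a\<in>{a\<in>A. 0 < a \<and> a \<le> n}. f a n)
      = (\<Sum>a\<in>{a\<in>A. 0 < a \<and> a \<le> n}. \<Sum>j=1..n div a. (-1)^(j-1) * F (n - j*a))"
    by (rule sum.cong[OF refl], rule alternating_sum_of_recurrence) (auto intro: below step)
  then show ?thesis
    using sum_alternating_sums_eq_tau_convolution[OF \<open>0 < n\<close>] by simp
qed

lemma card_image_Diff_int:
  assumes "inj_on g (Y - X)" and "X \<subseteq> Y" and "finite Y"
  shows "int (card (g ` (Y - X))) = int (card Y) - int (card X)"
  using assms by (simp add: card_image card_Diff_subset finite_subset card_mono of_nat_diff)

lemma carlitz_comps_distinct_adj:
  "carlitz_comps A m = {xs. (\<forall>x\<in>set xs. 0 < x \<and> x \<in> A) \<and> sum_list xs = m \<and> distinct_adj xs}"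
  by (simp add: carlitz_comps_def distinct_adj_conv_nth)

lemma length_le_sum_list_pos: "\<forall>x\<in>set xs. 0 < (x::nat) \<Longrightarrow> length xs \<le> sum_list xs"
  by (induction xs) auto

lemma finite_carlitz_comps: "finite (carlitz_comps A m)"
proof (rule finite_subset)
  show "carlitz_comps A m \<subseteq> {xs. set xs \<subseteq> {..m} \<and> length xs \<le> m}"
    using length_le_sum_list_pos member_le_sum_list by (fastforce simp: carlitz_comps_def)
  show "finite {xs. set xs \<subseteq> {..m} \<and> length xs \<le> m}"
    by (rule finite_lists_length_le) simp
qed

definition carlitz_comps_with_head :: "nat set \<Rightarrow> nat \<Rightarrow> nat \<Rightarrow> nat list set" where
  "carlitz_comps_with_head A a m = {xs \<in> carlitz_comps A m. xs \<noteq> [] \<and> hd xs = a}"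

lemma carlitz_comps_with_head_eq_empty:
  assumes "m < a"
  shows "carlitz_comps_with_head A a m = {}"
proof -
  have "a \<le> m" if "xs \<in> carlitz_comps A m" "xs \<noteq> []" "hd xs = a" for xs
    using that member_le_sum_list[of "hd xs" xs] by (auto simp: carlitz_comps_def)
  then show ?thesis using assms by (force simp: carlitz_comps_with_head_def)
qed

lemma carlitz_comps_with_head_add:
  assumes "0 < a" and "a \<in> A"
  shows "carlitz_comps_with_head A a (k + a)
       = (#) a ` (carlitz_comps A k - carlitz_comps_with_head A a k)"
proof -
  have "a # ys \<in> carlitz_comps A (k + a) \<longleftrightarrow> ys \<in> carlitz_comps A k \<and> (ys = [] \<or> hd ys \<noteq> a)" for ys
    using assms by (auto simp: carlitz_comps_distinct_adj distinct_adj_Cons)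
  then show ?thesis
    by (auto simp: carlitz_comps_with_head_def image_iff neq_Nil_conv)
qed

lemma carlitz_comps_eq_UN_heads:
  assumes "0 < n"
  shows "carlitz_comps A n = (\<Union>a\<in>{a\<in>A. 0 < a \<and> a \<le> n}. carlitz_comps_with_head A a n)"
proof -
  have "hd xs \<in> {a\<in>A. 0 < a \<and> a \<le> n} \<and> xs \<noteq> []" if "xs \<in> carlitz_comps A n" for xs
    using that assms member_le_sum_list[of "hd xs" xs] by (cases xs) (auto simp: carlitz_comps_def)
  then show ?thesis by (auto simp: carlitz_comps_with_head_def)
qed

lemma cl_eq_sum_heads:
  assumes "0 < n"
  shows "cl A n = (\<Sum>a\<in>{a\<in>A. 0 < a \<and> a \<le> n}. card (carlitz_comps_with_head A a n))"
  unfolding cl_def carlitz_comps_eq_UN_heads[OF assms]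
  by (rule card_UN_disjoint)
    (auto simp: carlitz_comps_with_head_def intro: finite_subset[OF _ finite_carlitz_comps])

lemma cl_tau_recurrence:
  assumes "0 < n"
  shows "int (cl A n) = (\<Sum>k=0..n-1. int (cl A k) * tau_s A (n - k))"
proof -
  have "int (card (carlitz_comps_with_head A a (m + a)))
      = int (cl A m) - int (card (carlitz_comps_with_head A a m))" if "0 < a" "a \<in> A" for a m
    unfolding carlitz_comps_with_head_add[OF that] cl_def
    by (rule card_image_Diff_int)
      (auto simp: carlitz_comps_with_head_def finite_carlitz_comps)
  then show ?thesis
    unfolding cl_eq_sum_heads[OF assms] of_nat_sum
    by (intro sum_head_recurrences_eq_tau_convolution assms)
      (simp_all add: carlitz_comps_with_head_eq_empty)
qed

lemma le_of_mem_distinct_parts: "S \<in> distinct_parts A m \<Longrightarrow> x \<in> S \<Longrightarrow> x \<le> m"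
  unfolding distinct_parts_def by (auto intro: member_le_sum)

lemma finite_distinct_parts: "finite (distinct_parts A m)"
  by (rule finite_subset[of _ "Pow {..m}"]) (auto dest: le_of_mem_distinct_parts)

definition distinct_parts_with :: "nat set \<Rightarrow> nat \<Rightarrow> nat \<Rightarrow> nat set set" where
  "distinct_parts_with A a m = {S \<in> distinct_parts A m. a \<in> S}"

lemma distinct_parts_with_eq_empty: "m < a \<Longrightarrow> distinct_parts_with A a m = {}"
  by (auto simp: distinct_parts_with_def dest: le_of_mem_distinct_parts)

lemma distinct_parts_with_add:
  assumes "0 < a" and "a \<in> A"
  shows "distinct_parts_with A a (k + a)
       = insert a ` (distinct_parts A k - distinct_parts_with A a k)"
proof (intro set_eqI iffI)
  fix S assume "S \<in> distinct_parts_with A a (k + a)"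
  then have S: "S \<in> distinct_parts A (k + a)" "a \<in> S" by (auto simp: distinct_parts_with_def)
  then have "\<Sum>(S - {a}) = k" by (simp add: distinct_parts_def sum_diff1_nat)
  with S have "S - {a} \<in> distinct_parts A k - distinct_parts_with A a k"
    by (auto simp: distinct_parts_def distinct_parts_with_def)
  moreover have "S = insert a (S - {a})" using \<open>a \<in> S\<close> by blast
  ultimately show "S \<in> insert a ` (distinct_parts A k - distinct_parts_with A a k)" by blast
next
  fix S assume "S \<in> insert a ` (distinct_parts A k - distinct_parts_with A a k)"
  then obtain T where T: "S = insert a T" "T \<in> distinct_parts A k" "a \<notin> T"
    by (auto simp: distinct_parts_with_def)
  then have "\<Sum>S = a + \<Sum>T" by (simp add: distinct_parts_def)
  with T assms show "S \<in> distinct_parts_with A a (k + a)"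
    by (auto simp: distinct_parts_def distinct_parts_with_def)
qed

lemma Nq_eq_sum_parts:
  "Nq A m = (\<Sum>a\<in>{a\<in>A. 0 < a \<and> a \<le> m}. card (distinct_parts_with A a m))"
proof -
  have "S = {a\<in>{a\<in>A. 0 < a \<and> a \<le> m}. a \<in> S}" if "S \<in> distinct_parts A m" for S
    using that le_of_mem_distinct_parts[OF that] by (auto simp: distinct_parts_def)
  then have "Nq A m = (\<Sum>S\<in>distinct_parts A m. card {a\<in>{a\<in>A. 0 < a \<and> a \<le> m}. a \<in> S})"
    unfolding Nq_def by (intro sum.cong) auto
  also have "\<dots> = (\<Sum>a\<in>{a\<in>A. 0 < a \<and> a \<le> m}. card (distinct_parts_with A a m))"
    by (rule sum_multicount_gen) (auto simp: finite_distinct_parts distinct_parts_with_def)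
  finally show ?thesis .
qed

lemma Nq_tau_recurrence:
  assumes "0 < n"
  shows "int (Nq A n) = (\<Sum>k=0..n-1. int (q A k) * tau_s A (n - k))"
proof -
  have "int (card (distinct_parts_with A a (m + a)))
      = int (q A m) - int (card (distinct_parts_with A a m))" if "0 < a" "a \<in> A" for a m
    unfolding distinct_parts_with_add[OF that] q_def
    by (rule card_image_Diff_int)
      (auto simp: distinct_parts_with_def finite_distinct_parts inj_on_def)
  then show ?thesis
    unfolding Nq_eq_sum_parts of_nat_sum
    by (intro sum_head_recurrences_eq_tau_convolution assms)
      (simp_all add: distinct_parts_with_eq_empty)
qed

lemma cl_0: "cl A 0 = 1"
proof -
  have "xs = []" if "xs \<in> carlitz_comps A 0" for xs
    using that by (cases xs) (auto simp: carlitz_comps_def)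
  then have "carlitz_comps A 0 = {[]}" by (auto simp: carlitz_comps_def)
  then show ?thesis by (simp add: cl_def)
qed

lemma Nq_0: "Nq A 0 = 0"
proof -
  have "distinct_parts A 0 = {{}}" by (auto simp: distinct_parts_def) fastforce
  then show ?thesis by (simp add: Nq_def)
qed

unbundle fps_syntax

lemma fps_mult_nth_if_nth_0_eq_0:
  fixes f g :: "'a::semiring_0 fps"
  assumes "0 < n" and "g $ 0 = 0"
  shows "(f * g) $ n = (\<Sum>k=0..n-1. f $ k * g $ (n - k))"
  using assms by (cases n) (simp_all add: fps_mult_nth sum.atLeast0_atMost_Suc)

lemma convolution_identity_of_tau_recurrences:
  fixes c g N t :: "nat \<Rightarrow> 'a::comm_ring_1"
  assumes "c 0 = 1" and c: "\<And>n. 0 < n \<Longrightarrow> c n = (\<Sum>k=0..n-1. c k * t (n - k))"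
    and "N 0 = 0" and N: "\<And>n. 0 < n \<Longrightarrow> N n = (\<Sum>k=0..n-1. g k * t (n - k))"
  shows "(\<Sum>k=0..n. c k * g (n - k)) - (\<Sum>k=0..n-1. c k * N (n - k)) = g n"
proof -
  define T where "T = Abs_fps (\<lambda>m. if m = 0 then 0 else t m)"
  have "T $ 0 = 0" by (simp add: T_def)
  have T_conv: "(Abs_fps f * T) $ n = (\<Sum>k=0..n-1. f k * t (n - k))" if "0 < n" for f n
    using that by (auto simp: T_def fps_mult_nth_if_nth_0_eq_0 intro!: sum.cong)
  have C_eq: "Abs_fps c = 1 + Abs_fps c * T"
  proof (rule fps_ext)
    show "Abs_fps c $ n = (1 + Abs_fps c * T) $ n" for n
      by (cases "n = 0") (simp_all add: \<open>T $ 0 = 0\<close> \<open>c 0 = 1\<close> c[of n] T_conv[of n])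
  qed
  have N_eq: "Abs_fps N = Abs_fps g * T"
  proof (rule fps_ext)
    show "Abs_fps N $ n = (Abs_fps g * T) $ n" for n
      by (cases "n = 0") (simp_all add: \<open>T $ 0 = 0\<close> \<open>N 0 = 0\<close> N[of n] T_conv[of n])
  qed
  have "Abs_fps c * Abs_fps g - Abs_fps c * Abs_fps N = Abs_fps g * (Abs_fps c - Abs_fps c * T)"
    unfolding N_eq by (simp add: algebra_simps)
  also have "Abs_fps c - Abs_fps c * T = 1"
    by (subst (1) C_eq) simp
  finally have "Abs_fps c * Abs_fps g - Abs_fps c * Abs_fps N = Abs_fps g" by simp
  then have "(Abs_fps c * Abs_fps g) $ n - (Abs_fps c * Abs_fps N) $ n = g n"
    by (metis fps_nth_Abs_fps fps_sub_nth)
  moreover have "(Abs_fps c * Abs_fps N) $ n = (\<Sum>k=0..n-1. c k * N (n - k))"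
    using \<open>N 0 = 0\<close> by (cases "n = 0") (simp_all add: fps_mult_nth_if_nth_0_eq_0)
  ultimately show ?thesis by (simp add: fps_mult_nth)
qed

theorem theorem7:
  fixes A :: "nat set" and n :: nat
  assumes "A \<noteq> {}" and "\<forall>a\<in>A. 0 < a" and "0 < n"
  shows "(int (cl A n) = (\<Sum>k=0..n-1. int (cl A k) * tau_s A (n - k))) \<and>
         ((\<Sum>k=0..n. int (cl A k) * int (q A (n - k)))
           - (\<Sum>t=0..n-1. int (cl A t) * int (Nq A (n - t))) = int (q A n))"
proof
  show "int (cl A n) = (\<Sum>k=0..n-1. int (cl A k) * tau_s A (n - k))"
    using \<open>0 < n\<close> by (rule cl_tau_recurrence)
  show "(\<Sum>k=0..n. int (cl A k) * int (q A (n - k)))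
      - (\<Sum>t=0..n-1. int (cl A t) * int (Nq A (n - t))) = int (q A n)"
    by (rule convolution_identity_of_tau_recurrences[where t = "tau_s A"])
      (simp_all add: cl_0 Nq_0 cl_tau_recurrence Nq_tau_recurrence)
qed

end
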